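(* Let $n\ge 1$, $X=\{1,\dots,n\}$, and identify the algebra $\mathcal{A}$ of functions $X\to\mathbb{R}$ (pointwise operations) with $\mathbb{R}^n$ with componentwise multiplication; let $e_1,\dots,e_n$ be the standard basis. Let $\sigma:X\to X$ be a bijection and $\tilde{\sigma}(f)=f\circ\sigma^{-1}$ the induced automorphism. Let $\Delta:\mathbb{R}^n\to\mathbb{R}^n$ be a linear operator whose standard matrix $[k_{li}]$ (with $k_{li}$ the $l$-th component of $\Delta(e_i)$) satisfies: (1) $k_{li}=0$ whenever $l\notin\{i,\sigma(i)\}$; (2) for every $i\in X$, writing $j=\sigma(i)$, $k_{ji}=-k_{jj}$. Then $\Delta$ is a $\tilde{\sigma}$-derivation, i.e. $\Delta(fg)=\tilde{\sigma}(f)\Delta(g)+\Delta(f)g$ for all $f,g\in\mathbb{R}^n$.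
   Context: Note $\tilde{\sigma}(e_i)=e_{\sigma(i)}$. *)

theory Defs
  imports "HOL-Analysis.Analysis"
begin

text \<open>The algebra of functions X \<rightarrow> R, X finite, is real ^ 'n with componentwise
  multiplication (times_vec).\<close>

definition sigma_tilde :: "('n::finite \<Rightarrow> 'n) \<Rightarrow> real ^ 'n \<Rightarrow> real ^ 'n" where
  "sigma_tilde \<sigma> f = (\<chi> l. f $ (inv \<sigma> l))"

definition sigma_derivation :: "('n::finite \<Rightarrow> 'n) \<Rightarrow> (real ^ 'n \<Rightarrow> real ^ 'n) \<Rightarrow> bool" where
  "sigma_derivation \<sigma> D \<longleftrightarrow>
     (\<forall>f g. D (f * g) = sigma_tilde \<sigma> f * D g + D f * g)"

end

theory Submission
  imports Defs
begin

text \<open>Conditions (1) and (2) say that the column \<open>\<Delta> e\<^sub>i\<close> is \<open>c\<^sub>i e\<^sub>i - c\<^sub>\<sigma>\<^sub>(\<^sub>i\<^sub>) e\<^sub>\<sigma>\<^sub>(\<^sub>i\<^sub>)\<close>,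
  where \<open>c\<close> is the diagonal of the matrix (if \<open>\<sigma> i = i\<close>, condition (2) forces \<open>c\<^sub>i = 0\<close>).
  These are also the columns of \<open>f \<mapsto> c (f - \<sigma>\<tilde>(f))\<close>, so \<open>\<Delta>\<close> is this operator, and
  \<open>c (f g - \<sigma>\<tilde>(f) \<sigma>\<tilde>(g)) = \<sigma>\<tilde>(f) c (g - \<sigma>\<tilde>(g)) + c (f - \<sigma>\<tilde>(f)) g\<close> because \<open>\<sigma>\<tilde>\<close> is
  multiplicative.\<close>

lemma mult_axis:
  fixes c :: "'a::mult_zero ^ 'n"
  shows "c * axis i a = axis i (c $ i * a)"
  by (simp add: axis_def vec_eq_iff)

lemma sigma_tilde_mult: "sigma_tilde \<sigma> (f * g) = sigma_tilde \<sigma> f * sigma_tilde \<sigma> g"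
  by (simp add: sigma_tilde_def vec_eq_iff)

lemma sigma_tilde_axis:
  assumes "bij \<sigma>"
  shows "sigma_tilde \<sigma> (axis i a) = axis (\<sigma> i) a"
proof -
  have "inv \<sigma> l = i \<longleftrightarrow> \<sigma> i = l" for l
    using assms by (metis bij_inv_eq_iff)
  then show ?thesis
    by (simp add: sigma_tilde_def axis_def vec_eq_iff)
qed

lemma sigma_derivation_scaled_difference:
  "sigma_derivation \<sigma> (\<lambda>f. c * (f - sigma_tilde \<sigma> f))"
  unfolding sigma_derivation_def sigma_tilde_mult by (simp add: algebra_simps)

lemma linear_scaled_difference: "linear (\<lambda>f. c * (f - sigma_tilde \<sigma> f))"
  by (rule linearI) (simp_all add: sigma_tilde_def vec_eq_iff algebra_simps)

lemma column_eq_diagonal_difference: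
  fixes \<sigma> :: "'n::finite \<Rightarrow> 'n" and \<Delta> :: "real ^ 'n \<Rightarrow> real ^ 'n"
  assumes off_support: "\<And>l i. l \<notin> {i, \<sigma> i} \<Longrightarrow> \<Delta> (axis i 1) $ l = 0"
    and image_entry: "\<And>i. \<Delta> (axis i 1) $ (\<sigma> i) = - (\<Delta> (axis (\<sigma> i) 1) $ (\<sigma> i))"
  shows "\<Delta> (axis i 1) = axis i (\<Delta> (axis i 1) $ i) - axis (\<sigma> i) (\<Delta> (axis (\<sigma> i) 1) $ \<sigma> i)"
proof (cases "\<sigma> i = i")
  case True
  then have "\<Delta> (axis i 1) $ i = 0"
    using image_entry[of i] by simp
  with True show ?thesis
    using off_support[of _ i] by (simp add: vec_eq_iff axis_def) metis
next
  case False
  then show ?thesis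
    using off_support[of _ i] image_entry[of i] by (auto simp: vec_eq_iff axis_def)
qed

theorem theorem2:
  fixes \<sigma> :: "'n::finite \<Rightarrow> 'n" and \<Delta> :: "real ^ 'n \<Rightarrow> real ^ 'n"
  assumes "bij \<sigma>"
    and "linear \<Delta>"
    and "\<And>l i. l \<notin> {i, \<sigma> i} \<Longrightarrow> \<Delta> (axis i 1) $ l = 0"
    and "\<And>i. \<Delta> (axis i 1) $ (\<sigma> i) = - (\<Delta> (axis (\<sigma> i) 1) $ (\<sigma> i))"
  shows "sigma_derivation \<sigma> \<Delta>"
proof -
  define c :: "real ^ 'n" where "c = (\<chi> l. \<Delta> (axis l 1) $ l)"
  have "\<Delta> = (\<lambda>f. c * (f - sigma_tilde \<sigma> f))"
  proof (rule linear_eq_stdbasis[OF \<open>linear \<Delta>\<close> linear_scaled_difference])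
    fix b :: "real ^ 'n"
    assume "b \<in> Basis"
    then obtain i where i: "b = axis i 1"
      by (auto simp: Basis_vec_def)
    have "c * (b - sigma_tilde \<sigma> b) = axis i (c $ i) - axis (\<sigma> i) (c $ \<sigma> i)"
      unfolding i sigma_tilde_axis[OF \<open>bij \<sigma>\<close>] right_diff_distrib mult_axis by simp
    also have "\<dots> = \<Delta> b"
      unfolding i c_def using column_eq_diagonal_difference[OF assms(3,4)] by simp
    finally show "\<Delta> b = c * (b - sigma_tilde \<sigma> b)" ..
  qed
  then show ?thesis
    using sigma_derivation_scaled_difference by simp
qed

end
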